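(* Let $n>(p+s)^4$ be an integer. For any $i \in \{1,2,\ldots,p-1+s\}$ and any $k \in \{1,2,\ldots,n\}$, we have $d_n^{p-1+s-i} r_{i,k} \in \mathbb{Z}$.
   Context: Let $p\geqslant 5$ be a prime and $s$ a positive integer. Write $v_p$ for the $p$-adic valuation, $(\alpha)_k=\alpha(\alpha+1)\cdots(\alpha+k-1)$, and $d_n=\operatorname{LCM}\{1,2,\ldots,n\}$. Put $N_0=v_p(p-1+s)$ and $M_0=p^{2+N_0}s-1$. For an integer $n>(p+s)^4$ let \[R_n(t)=p^{pn}\, n!^s\, t^{M_0}\,\frac{\prod_{j=1}^{p-1}(t+\frac{j}{p})_n}{(t)_{n+1}^{p-1+s}}\in\mathbb{Q}(t),\] with partial fraction decomposition $R_n(t)=\sum_{i=1}^{p-1+s}\sum_{k=1}^{n} r_{i,k}(t+k)^{-i}$, $r_{i,k}\in\mathbb{Q}$. *)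

theory Defs
  imports "HOL-Computational_Algebra.Computational_Algebra"
begin

definition N0 :: "nat \<Rightarrow> nat \<Rightarrow> nat" where
  "N0 p s = multiplicity p (p - 1 + s)"

definition M0 :: "nat \<Rightarrow> nat \<Rightarrow> nat" where
  "M0 p s = p ^ (2 + N0 p s) * s - 1"

definition dlcm :: "nat \<Rightarrow> nat" where
  "dlcm n = Lcm {1..n}"

definition Rn :: "nat \<Rightarrow> nat \<Rightarrow> nat \<Rightarrow> rat \<Rightarrow> rat" where
  "Rn p s n t = (of_nat p) ^ (p * n) * (fact n) ^ s * t ^ (M0 p s)
      * (\<Prod>j = 1..p - 1. pochhammer (t + of_nat j / of_nat p) n)
      / (pochhammer t (n + 1)) ^ (p - 1 + s)"

end

theory Submission
  imports Defs
begin

(* Put u = t + k, P = p - 1 + s and Q_k(u) = prod_{l /= k} (u + l - k), so that (t)_{n+1} = u Q_k(u).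
   Multiplying the partial fraction expansion by (t)_{n+1}^P turns every pole k' /= k into a multiple
   of u^P, so r_{i,k} is the coefficient of u^(P-i) in the power series N(u) / Q_k(u)^P, where
   N(u) = (t)_{n+1}^P R_n(t) is a polynomial.  With E = v_p(n!) and (p - 1) E <= n this series is
     p^(n - (p-1) E) (u - k)^M_0  prod_j (p^E A_j(u) / Q_k(u))  (n! / Q_k(u))^s,
   A_j(u) = prod_{m<n} (j + p (m - k) + p u), and every factor F satisfies d_n^m [u^m] F in Z.
   For this, Lagrange interpolation at the nodes k - l (0 <= l <= n) writes A / Q_k as a combination
   of 1 and u / (u + l - k), whose m-th coefficients become integers after multiplication by d_n^m;
   the weights A(k - l) / (l! (n - l)!) are binomial coefficients for A = n!, and for A = p^E A_j they
   are integers because the p-free part of L! divides any product of L consecutive terms of an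
   arithmetic progression with difference p. *)

definition scaled_integral :: "'a::comm_ring_1 \<Rightarrow> 'a fps \<Rightarrow> bool" where
  "scaled_integral c f \<longleftrightarrow> (\<forall>m. c ^ m * f $ m \<in> \<int>)"

lemma scaled_integral_const: "a \<in> \<int> \<Longrightarrow> scaled_integral c (fps_const a)"
  by (auto simp: scaled_integral_def)

lemma scaled_integral_Ints_coeffs:
  "c \<in> \<int> \<Longrightarrow> (\<And>m. f $ m \<in> \<int>) \<Longrightarrow> scaled_integral c f"
  by (auto simp: scaled_integral_def)

lemma scaled_integral_add:
  "scaled_integral c f \<Longrightarrow> scaled_integral c g \<Longrightarrow> scaled_integral c (f + g)"
  by (auto simp: scaled_integral_def distrib_left)

lemma scaled_integral_mult:
  assumes "scaled_integral c f" "scaled_integral c g"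
  shows "scaled_integral c (f * g)"
  unfolding scaled_integral_def
proof
  fix m
  have "c ^ m * (f * g) $ m = (\<Sum>i=0..m. (c ^ i * f $ i) * (c ^ (m - i) * g $ (m - i)))"
    unfolding fps_mult_nth sum_distrib_left
    by (intro sum.cong refl) (auto simp: power_add[symmetric] algebra_simps)
  also have "\<dots> \<in> \<int>"
  proof -
    have "c ^ i * f $ i \<in> \<int>" "c ^ i * g $ i \<in> \<int>" for i
      using assms unfolding scaled_integral_def by blast+
    then show ?thesis by (intro Ints_sum) (rule Ints_mult)
  qed
  finally show "c ^ m * (f * g) $ m \<in> \<int>" .
qed

lemma scaled_integral_sum:
  "(\<And>x. x \<in> A \<Longrightarrow> scaled_integral c (f x)) \<Longrightarrow> scaled_integral c (\<Sum>x\<in>A. f x)"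
  by (induction A rule: infinite_finite_induct)
    (auto intro: scaled_integral_add scaled_integral_const[of 0, simplified])

lemma scaled_integral_prod:
  "(\<And>x. x \<in> A \<Longrightarrow> scaled_integral c (f x)) \<Longrightarrow> scaled_integral c (\<Prod>x\<in>A. f x)"
  by (induction A rule: infinite_finite_induct)
    (auto intro: scaled_integral_mult scaled_integral_const[of 1, simplified])

lemma scaled_integral_power: "scaled_integral c f \<Longrightarrow> scaled_integral c (f ^ m)"
  using scaled_integral_prod[of "{..<m}" c "\<lambda>_. f"] by simp

lemma scaled_integral_X_div_X_minus_const:
  fixes a c :: "'a::field"
  assumes "a \<noteq> 0" and "c / a \<in> \<int>"
  shows "scaled_integral c (fps_X * inverse (fps_X - fps_const a))"
proof -
  define g where "g = Abs_fps (\<lambda>m. - 1 / a ^ (m + 1))"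
  have "(fps_X - fps_const a) * g = 1"
    using assms(1) by (intro fps_ext) (auto simp: g_def algebra_simps fps_X_mult_nth power_eq_if)
  then have inv: "inverse (fps_X - fps_const a) = g" by (rule fps_inverse_unique)
  show ?thesis
    unfolding scaled_integral_def
  proof
    fix m
    show "c ^ m * (fps_X * inverse (fps_X - fps_const a)) $ m \<in> \<int>"
    proof (cases m)
      case (Suc m')
      then have "c ^ m * (fps_X * g) $ m = - ((c / a) ^ m)"
        by (simp add: g_def power_divide)
      then show ?thesis using assms(2) by (simp add: inv)
    qed simp
  qed
qed

lemma multiplicity_prime_fact:
  fixes p :: nat
  assumes p: "prime p"
  shows "multiplicity p (fact n :: nat) = n div p + multiplicity p (fact (n div p) :: nat)"
proof -
  have p0: "p > 0" using p prime_gt_0_nat by blast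
  define coprime_part where "coprime_part = \<Prod>({1..n} - {i. p dvd i})"
  have multiples: "{1..n} \<inter> {i. p dvd i} = (\<lambda>q. p * q) ` {1..n div p}"
  proof (intro equalityI subsetI)
    fix x assume "x \<in> {1..n} \<inter> {i. p dvd i}"
    then obtain q where "x = p * q" "1 \<le> x" "x \<le> n" by (auto elim: dvdE)
    moreover from \<open>x = p * q\<close> have "q \<le> n div p"
      using div_le_mono[OF \<open>x \<le> n\<close>, of p] p0 by simp
    ultimately show "x \<in> (\<lambda>q. p * q) ` {1..n div p}" by auto
  next
    fix x assume "x \<in> (\<lambda>q. p * q) ` {1..n div p}"
    then obtain q where "1 \<le> q" "q \<le> n div p" "x = p * q" by auto
    moreover have "p * (n div p) \<le> n" by simp
    ultimately show "x \<in> {1..n} \<inter> {i. p dvd i}" using p0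
      by (auto intro: order.trans[OF mult_le_mono2])
  qed
  have "(fact n :: nat) = \<Prod>{1..n}"
    by (simp add: fact_prod)
  also have "\<dots> = \<Prod>({1..n} \<inter> {i. p dvd i}) * coprime_part"
    unfolding coprime_part_def by (rule prod.Int_Diff) simp
  also have "\<Prod>({1..n} \<inter> {i. p dvd i}) = (\<Prod>q\<in>{1..n div p}. p * q)"
    unfolding multiples using p0 by (subst prod.reindex) (auto simp: inj_on_def)
  also have "\<dots> = p ^ (n div p) * fact (n div p)"
    by (simp add: prod.distrib fact_prod)
  finally have "(fact n :: nat) = p ^ (n div p) * fact (n div p) * coprime_part" .
  moreover have "\<not> p dvd coprime_part"
    using p unfolding coprime_part_def by (subst prime_dvd_prod_iff) auto
  moreover have "coprime_part \<noteq> 0"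
    unfolding coprime_part_def by (auto simp: prod_zero_iff)
  ultimately show ?thesis
    using p by (simp add: prime_elem_multiplicity_mult_distrib not_dvd_imp_multiplicity_0)
qed

lemma multiplicity_prime_fact_le:
  fixes p :: nat
  assumes p: "prime p"
  shows "(p - 1) * multiplicity p (fact n :: nat) \<le> n"
proof (induction n rule: less_induct)
  case (less n)
  show ?case
  proof (cases "n div p = 0")
    case True
    then show ?thesis using multiplicity_prime_fact[OF p, of n] by simp
  next
    case False
    then have "n div p < n"
      using prime_gt_1_nat[OF p] by (intro div_less_dividend) (auto intro: Nat.gr0I)
    then have "(p - 1) * multiplicity p (fact n :: nat) \<le> (p - 1) * (n div p) + n div p"
      using less multiplicity_prime_fact[OF p, of n] by (simp add: algebra_simps)
    also have "\<dots> \<le> n"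
      using prime_gt_1_nat[OF p] by (simp add: algebra_simps)
    finally show ?thesis .
  qed
qed

text \<open>The part of \<open>L!\<close> prime to \<open>p\<close> divides the product since \<open>p\<close> is invertible modulo it,
  which turns the progression into \<open>p\<^sup>L\<close> times \<open>L\<close> consecutive integers.\<close>
lemma fact_dvd_prod_progression:
  fixes p :: nat and x :: int
  assumes p: "prime p"
  shows "fact L dvd int p ^ multiplicity p (fact L :: nat) * (\<Prod>m<L. x + int p * int m)"
proof -
  obtain c :: nat where c: "(fact L :: nat) = p ^ multiplicity p (fact L :: nat) * c" "\<not> p dvd c"
    using multiplicity_decompose'[of "fact L :: nat" p] prime_gt_1_nat[OF p] by auto
  have "coprime (int p) (int c)"
    using p c(2) by (simp add: prime_imp_coprime)
  then obtain u v where uv: "u * int p + v * int c = 1"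
    using bezout_int[of "int p" "int c"] by auto
  have up: "u * int p = 1 - v * int c" using uv by linarith
  have "(x + int p * int m) mod int c = (int p * (u * x + int m)) mod int c" for m
  proof -
    have "int p * (u * x + int m) = (u * int p) * x + int p * int m"
      by (simp add: algebra_simps)
    also have "\<dots> = x + int p * int m + (- v * x) * int c"
      unfolding up by (simp add: algebra_simps)
    finally show ?thesis by (metis mod_mult_self1)
  qed
  then have "(\<Prod>m<L. x + int p * int m) mod int c = (\<Prod>m<L. int p * (u * x + int m)) mod int c"
    by (metis (no_types, lifting) mod_prod_eq prod.cong)
  also have "(\<Prod>m<L. int p * (u * x + int m)) = int p ^ L * pochhammer (u * x) L"
    by (simp add: prod.distrib pochhammer_prod atLeast0LessThan)
  also have "\<dots> mod int c = 0"
  proof -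
    have "int c dvd fact L" using c(1) by (metis dvd_triv_right of_nat_dvd_iff of_nat_fact)
    also have "fact L dvd pochhammer (u * x) L" by (rule fact_dvd_pochhammer)
    finally show ?thesis by simp
  qed
  finally have "int c dvd (\<Prod>m<L. x + int p * int m)" by (simp add: dvd_eq_mod_eq_0)
  moreover have "(fact L :: int) = int p ^ multiplicity p (fact L :: nat) * int c"
    using arg_cong[OF c(1), of int] by simp
  ultimately show ?thesis by simp
qed

lemma fact_mult_fact_dvd_prod_progression:
  fixes p :: nat and x :: int
  assumes p: "prime p" and l: "l \<le> n"
  shows "fact l * fact (n - l) dvd
    int p ^ multiplicity p (fact n :: nat) * (\<Prod>m<n. x + int p * (int m - int l))"
proof -
  define f where "f m = x + int p * (int m - int l)" for m
  define e1 where "e1 = multiplicity p (fact l :: nat)"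
  define e2 where "e2 = multiplicity p (fact (n - l) :: nat)"
  have "e1 + e2 = multiplicity p (fact l * fact (n - l) :: nat)"
    unfolding e1_def e2_def using p by (simp add: prime_elem_multiplicity_mult_distrib)
  also have "\<dots> \<le> multiplicity p (fact n :: nat)"
    using fact_fact_dvd_fact[of l "n - l"] l by (intro dvd_imp_multiplicity_le) auto
  finally have exponents: "e1 + e2 \<le> multiplicity p (fact n :: nat)" .
  have "(\<Prod>m<n. f m) = (\<Prod>m<l. f m) * (\<Prod>m\<in>{l..<n}. f m)"
    using prod.atLeastLessThan_concat[of 0 l n f] l by (simp add: atLeast0LessThan)
  also have "(\<Prod>m\<in>{l..<n}. f m) = (\<Prod>m<n-l. f (m + l))"
    using prod.shift_bounds_nat_ivl[of f 0 l "n - l"] l by (simp add: atLeast0LessThan)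
  also have "(\<Prod>m<l. f m) = (\<Prod>m<l. (x - int p * int l) + int p * int m)"
    by (simp add: f_def algebra_simps)
  also have "(\<Prod>m<n-l. f (m + l)) = (\<Prod>m<n-l. x + int p * int m)"
    by (simp add: f_def)
  finally have split: "int p ^ (e1 + e2) * (\<Prod>m<n. f m) =
      (int p ^ e1 * (\<Prod>m<l. (x - int p * int l) + int p * int m)) *
      (int p ^ e2 * (\<Prod>m<n-l. x + int p * int m))"
    by (simp add: power_add ac_simps)
  have "fact l * fact (n - l) dvd int p ^ (e1 + e2) * (\<Prod>m<n. f m)"
    unfolding split unfolding e1_def e2_def by (intro mult_dvd_mono fact_dvd_prod_progression p)
  also have "\<dots> dvd int p ^ multiplicity p (fact n :: nat) * (\<Prod>m<n. f m)"
    using exponents by (intro mult_dvd_mono le_imp_power_dvd) auto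
  finally show ?thesis unfolding f_def .
qed

lemma lagrange_interpolation:
  fixes Q :: "'a::field poly" and e :: "'b \<Rightarrow> 'a"
  assumes fin: "finite I" and inj: "inj_on e I" and deg: "degree Q < card I"
  shows "Q = (\<Sum>l\<in>I. smult (poly Q (e l) / (\<Prod>l'\<in>I-{l}. e l - e l'))
    (\<Prod>l'\<in>I-{l}. [:- e l', 1:]))"
    (is "Q = ?R")
proof (rule poly_eqI_degree[where A = "e ` I"])
  have card: "card (e ` I) = card I" using inj by (rule card_image)
  have "degree ?R \<le> card I - 1"
  proof (rule degree_sum_le[OF fin])
    fix l assume "l \<in> I"
    have "degree (\<Prod>l'\<in>I-{l}. [:- e l', 1:]) \<le> (\<Sum>l'\<in>I-{l}. degree [:- e l', 1:])"
      using degree_prod_sum_le[of "I-{l}" "\<lambda>l'. [:- e l', 1:]"] fin by (simp add: o_def)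
    also have "\<dots> = card I - 1" using fin \<open>l \<in> I\<close> by simp
    finally show "degree (smult (poly Q (e l) / (\<Prod>l'\<in>I-{l}. e l - e l'))
        (\<Prod>l'\<in>I-{l}. [:- e l', 1:])) \<le> card I - 1"
      using degree_smult_le order.trans by blast
  qed
  then show "degree ?R < card (e ` I)" "degree Q < card (e ` I)" using deg card by linarith+
  fix y assume "y \<in> e ` I"
  then obtain z where z: "z \<in> I" "y = e z" by blast
  have vanish: "(\<Prod>l'\<in>I-{l}. e z - e l') = 0" if "l \<in> I - {z}" for l
    using fin that z(1) by (intro prod_zero) auto
  have "(\<Prod>l'\<in>I-{z}. e z - e l') \<noteq> 0"
    using fin inj z(1) by (auto simp: prod_zero_iff inj_on_def)
  have "poly ?R (e z) =
      (\<Sum>l\<in>I. poly Q (e l) / (\<Prod>l'\<in>I-{l}. e l - e l') * (\<Prod>l'\<in>I-{l}. e z - e l'))"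
    by (simp add: poly_sum poly_prod)
  also have "\<dots> = poly Q (e z) / (\<Prod>l'\<in>I-{z}. e z - e l') * (\<Prod>l'\<in>I-{z}. e z - e l')"
    using fin z(1) vanish by (simp add: sum.remove[of I z] sum.neutral)
  also have "\<dots> = poly Q (e z)"
    using \<open>(\<Prod>l'\<in>I-{z}. e z - e l') \<noteq> 0\<close> by simp
  finally show "poly Q y = poly ?R y" using z by simp
qed

lemma fps_lagrange_basis_ratio:
  fixes e :: "'b \<Rightarrow> 'a::field"
  assumes fin: "finite I" and inj: "inj_on e I" and z: "z \<in> I" "e z = 0" and l: "l \<in> I"
  shows "fps_of_poly (\<Prod>l'\<in>I-{l}. [:- e l', 1:]) *
      inverse (fps_of_poly (\<Prod>l'\<in>I-{z}. [:- e l', 1:])) =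
    (if l = z then 1 else fps_X * inverse (fps_X - fps_const (e l)))"
proof -
  have nonzero: "e l' \<noteq> 0" if "l' \<in> I - {z}" for l'
    using inj_onD[OF inj _ _ z(1), of l'] z(2) that by auto
  have const_coeff: "fps_of_poly (\<Prod>l'\<in>A. [:- e l', 1:]) $ 0 \<noteq> 0" if "A \<subseteq> I - {z}" for A
  proof -
    have "\<forall>l'\<in>A. e l' \<noteq> 0" using that nonzero by blast
    moreover have "finite A" using that fin finite_subset by blast
    ultimately show ?thesis by (simp add: poly_0_coeff_0[symmetric] poly_prod prod_zero_iff)
  qed
  show ?thesis
  proof (cases "l = z")
    case True
    then show ?thesis using const_coeff[of "I - {z}"] by (simp add: inverse_mult_eq_1')
  next
    case False
    define B where "B = fps_of_poly (\<Prod>l'\<in>I-{l}-{z}. [:- e l', 1:])"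
    have "(\<Prod>l'\<in>I-{l}. [:- e l', 1:]) = [:- e z, 1:] * (\<Prod>l'\<in>I-{l}-{z}. [:- e l', 1:])"
      using fin z False by (intro prod.remove) auto
    then have "fps_of_poly (\<Prod>l'\<in>I-{l}. [:- e l', 1:]) = fps_X * B"
      using z(2) by (simp add: B_def fps_of_poly_mult)
    moreover have "(\<Prod>l'\<in>I-{z}. [:- e l', 1:]) = [:- e l, 1:] * (\<Prod>l'\<in>I-{z}-{l}. [:- e l', 1:])"
      using fin l False by (intro prod.remove) auto
    then have "fps_of_poly (\<Prod>l'\<in>I-{z}. [:- e l', 1:]) = fps_of_poly [:- e l, 1:] * B"
      unfolding B_def fps_of_poly_mult[symmetric] by (metis Diff_insert Diff_insert2)
    moreover have "fps_of_poly [:- e l, 1:] = fps_X - fps_const (e l)"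
      by (simp add: fps_of_poly_pCons fps_const_neg)
    moreover have "B $ 0 \<noteq> 0" unfolding B_def by (rule const_coeff) auto
    ultimately show ?thesis
      using False by (simp add: fps_inverse_mult inverse_mult_eq_1' ac_simps)
  qed
qed

lemma fps_partial_fractions:
  fixes Q :: "'a::field poly" and e :: "'b \<Rightarrow> 'a"
  assumes fin: "finite I" and inj: "inj_on e I" and z: "z \<in> I" "e z = 0"
    and deg: "degree Q < card I"
  shows "fps_of_poly Q * inverse (fps_of_poly (\<Prod>l\<in>I-{z}. [:- e l, 1:])) =
    (\<Sum>l\<in>I. fps_const (poly Q (e l) / (\<Prod>l'\<in>I-{l}. e l - e l')) *
       (if l = z then 1 else fps_X * inverse (fps_X - fps_const (e l))))"
proof -
  have "fps_of_poly Q * inverse (fps_of_poly (\<Prod>l\<in>I-{z}. [:- e l, 1:])) =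
      (\<Sum>l\<in>I. fps_const (poly Q (e l) / (\<Prod>l'\<in>I-{l}. e l - e l')) *
        (fps_of_poly (\<Prod>l'\<in>I-{l}. [:- e l', 1:]) * inverse (fps_of_poly (\<Prod>l\<in>I-{z}. [:- e l, 1:]))))"
    by (subst lagrange_interpolation[OF fin inj deg])
      (simp add: fps_of_poly_sum fps_of_poly_smult sum_distrib_right mult.assoc)
  also have "\<dots> = (\<Sum>l\<in>I. fps_const (poly Q (e l) / (\<Prod>l'\<in>I-{l}. e l - e l')) *
       (if l = z then 1 else fps_X * inverse (fps_X - fps_const (e l))))"
    using fps_lagrange_basis_ratio[OF fin inj z] by (intro sum.cong refl) simp
  finally show ?thesis .
qed

lemma scaled_integral_partial_fractions:
  fixes Q :: "'a::field poly" and e :: "'b \<Rightarrow> 'a"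
  assumes fin: "finite I" and inj: "inj_on e I" and z: "z \<in> I" "e z = 0"
    and deg: "degree Q < card I"
    and coeffs: "\<And>l. l \<in> I \<Longrightarrow> C * (poly Q (e l) / (\<Prod>l'\<in>I-{l}. e l - e l')) \<in> \<int>"
    and nodes: "\<And>l. l \<in> I - {z} \<Longrightarrow> c / e l \<in> \<int>"
  shows "scaled_integral c
    (fps_const C * fps_of_poly Q * inverse (fps_of_poly (\<Prod>l\<in>I-{z}. [:- e l, 1:])))"
  unfolding mult.assoc fps_partial_fractions[OF assms(1-5)] sum_distrib_left
proof (intro scaled_integral_sum)
  fix l assume l: "l \<in> I"
  have "e l \<noteq> 0" if "l \<noteq> z"
    using inj_onD[OF inj _ l z(1)] z(2) that by auto
  then have "scaled_integral c (fps_const (C * (poly Q (e l) / (\<Prod>l'\<in>I-{l}. e l - e l'))) *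
      (if l = z then 1 else fps_X * inverse (fps_X - fps_const (e l))))"
    using l nodes
    by (intro scaled_integral_mult scaled_integral_const coeffs)
      (auto intro: scaled_integral_X_div_X_minus_const scaled_integral_const[of 1, simplified])
  then show "scaled_integral c (fps_const C * (fps_const (poly Q (e l) / (\<Prod>l'\<in>I-{l}. e l - e l')) *
      (if l = z then 1 else fps_X * inverse (fps_X - fps_const (e l)))))"
    by (simp only: mult.assoc[symmetric] fps_const_mult)
qed

(* As polynomials in u = t + k, (t)_{n+1} = u * pochhammer_cofactor n k. *)
definition pochhammer_cofactor :: "nat \<Rightarrow> nat \<Rightarrow> 'a::comm_ring_1 poly" where
  "pochhammer_cofactor n k = (\<Prod>l\<in>{0..n}-{k}. [:of_int (int l - int k), 1:])"

lemma prod_node_differences: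
  assumes "l \<le> n"
  shows "(\<Prod>l'\<in>{0..n}-{l}. of_int (int l' - int l) :: 'a::{comm_ring_1,ring_char_0}) =
    (-1) ^ l * fact l * fact (n - l)"
proof -
  have split: "{0..n}-{l} = {0..<l} \<union> {Suc l..n}" using assms by auto
  have "(\<Prod>l'\<in>{0..n}-{l}. int l' - int l) =
      (\<Prod>l'\<in>{0..<l}. int l' - int l) * (\<Prod>l'\<in>{Suc l..n}. int l' - int l)"
    unfolding split by (rule prod.union_disjoint) auto
  also have "(\<Prod>l'\<in>{0..<l}. int l' - int l) = (\<Prod>l'\<in>{0..<l}. (-1) * int (l - l'))"
    by (intro prod.cong) auto
  also have "\<dots> = (-1) ^ l * fact l"
    by (simp only: prod.distrib prod_constant card_atLeastLessThan diff_zero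
        fact_prod_rev[where 'a=int, of l] of_nat_prod)
  also have "(\<Prod>l'\<in>{Suc l..n}. int l' - int l) = (\<Prod>i\<in>{1..n-l}. int (i + l) - int l)"
    using assms prod.shift_bounds_cl_nat_ivl[of "\<lambda>l'. int l' - int l" 1 l "n - l"] by simp
  also have "\<dots> = fact (n - l)" by (simp add: fact_prod)
  finally have "(\<Prod>l'\<in>{0..n}-{l}. int l' - int l) = (-1) ^ l * fact l * fact (n - l)" .
  then show ?thesis
    by (metis (mono_tags) of_int_prod of_int_fact of_int_mult of_int_power of_int_minus of_int_1)
qed

lemma dlcm_div_Ints:
  fixes d :: int
  assumes "d \<noteq> 0" and "\<bar>d\<bar> \<le> int n"
  shows "(of_nat (dlcm n) :: 'a::field_char_0) / of_int d \<in> \<int>"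
proof -
  have "nat \<bar>d\<bar> dvd dlcm n"
    unfolding dlcm_def using assms by (intro dvd_Lcm) auto
  then obtain q where "dlcm n = nat \<bar>d\<bar> * q" by (rule dvdE)
  then have "(of_nat (dlcm n) :: 'a) = of_int \<bar>d\<bar> * of_nat q" by simp
  then have "(of_nat (dlcm n) :: 'a) / of_int d = of_int (sgn d) * of_nat q"
    using assms(1) by (cases "d > 0") (auto simp: field_simps)
  then show ?thesis by simp
qed

lemma scaled_integral_div_pochhammer_cofactor:
  fixes Q :: "'a::field_char_0 poly"
  assumes deg: "degree Q \<le> n" and k: "k \<le> n"
    and coeffs: "\<And>l. l \<le> n \<Longrightarrow> C * poly Q (of_int (int k - int l)) / (fact l * fact (n - l)) \<in> \<int>"
  shows "scaled_integral (of_nat (dlcm n))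
    (fps_const C * fps_of_poly Q * inverse (fps_of_poly (pochhammer_cofactor n k)))"
proof -
  define e :: "nat \<Rightarrow> 'a" where "e l = of_int (int k - int l)" for l
  have "pochhammer_cofactor n k = (\<Prod>l\<in>{0..n}-{k}. [:- e l, 1:])"
    unfolding pochhammer_cofactor_def e_def by (intro prod.cong) auto
  moreover have "scaled_integral (of_nat (dlcm n))
      (fps_const C * fps_of_poly Q * inverse (fps_of_poly (\<Prod>l\<in>{0..n}-{k}. [:- e l, 1:])))"
  proof (rule scaled_integral_partial_fractions)
    show "inj_on e {0..n}" by (auto simp: inj_on_def e_def)
    show "degree Q < card {0..n}" using deg by simp
    fix l assume l: "l \<in> {0..n}"
    have "(\<Prod>l'\<in>{0..n}-{l}. e l - e l') = (\<Prod>l'\<in>{0..n}-{l}. of_int (int l' - int l))"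
      by (simp add: e_def)
    also have "\<dots> = (-1) ^ l * fact l * fact (n - l)"
      by (rule prod_node_differences) (use l in auto)
    finally have "(\<Prod>l'\<in>{0..n}-{l}. e l - e l') = (-1) ^ l * fact l * fact (n - l)" .
    then have "C * (poly Q (e l) / (\<Prod>l'\<in>{0..n}-{l}. e l - e l')) =
        (-1) ^ l * (C * poly Q (e l) / (fact l * fact (n - l)))"
      by (cases "even l") simp_all
    also have "\<dots> \<in> \<int>"
      using coeffs[of l] l by (intro Ints_mult Ints_power Ints_minus Ints_1) (simp_all add: e_def)
    finally show "C * (poly Q (e l) / (\<Prod>l'\<in>{0..n}-{l}. e l - e l')) \<in> \<int>" .
  next
    fix l assume "l \<in> {0..n} - {k}"
    then show "of_nat (dlcm n) / e l \<in> \<int>"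
      using k unfolding e_def by (intro dlcm_div_Ints) auto
  qed (use k in \<open>auto simp: e_def\<close>)
  ultimately show ?thesis by simp
qed

definition progression_poly :: "nat \<Rightarrow> nat \<Rightarrow> nat \<Rightarrow> nat \<Rightarrow> 'a::comm_ring_1 poly" where
  "progression_poly p n k j = (\<Prod>m<n. [:of_int (int j + int p * (int m - int k)), of_nat p:])"

lemma degree_progression_poly: "degree (progression_poly p n k j) \<le> n"
proof -
  have "degree (progression_poly p n k j :: 'a poly) \<le>
      (\<Sum>m<n. degree ([:of_int (int j + int p * (int m - int k)), of_nat p:] :: 'a poly))"
    unfolding progression_poly_def
    using degree_prod_sum_le[of "{..<n}"
        "\<lambda>m. [:of_int (int j + int p * (int m - int k)), of_nat p:] :: 'a poly"]
    by (simp add: o_def)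
  also have "\<dots> \<le> (\<Sum>m<n. 1)"
    by (intro sum_mono) (simp add: degree_pCons_le)
  finally show ?thesis by simp
qed

lemma poly_progression_poly_node:
  "poly (progression_poly p n k j) (of_int (int k - int l)) =
    (of_int (\<Prod>m<n. int j + int p * (int m - int l)) :: 'a::comm_ring_1)"
  unfolding progression_poly_def poly_prod of_int_prod
  by (intro prod.cong refl) (simp add: algebra_simps)

lemma poly_progression_poly_shift:
  assumes "p > 0"
  shows "poly (progression_poly p n k j) (t + of_nat k) =
    of_nat p ^ n * pochhammer (t + of_nat j / of_nat p :: 'a::field_char_0) n"
proof -
  have "of_int (int j + int p * (int m - int k)) + (t + of_nat k) * of_nat p =
      of_nat p * (t + of_nat j / of_nat p + of_nat m)" for m
    using assms by (simp add: field_simps)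
  then show ?thesis
    unfolding progression_poly_def poly_prod pochhammer_prod atLeast0LessThan
    by (simp add: prod.distrib)
qed

lemma scaled_integral_fact_div_pochhammer_cofactor:
  assumes "k \<le> n"
  shows "scaled_integral (of_nat (dlcm n))
    (fps_const (fact n) * inverse (fps_of_poly (pochhammer_cofactor n k)) :: 'a::field_char_0 fps)"
  using scaled_integral_div_pochhammer_cofactor[of 1 n k "fact n"] assms
  by (simp add: binomial_fact[symmetric])

lemma scaled_integral_progression_div_pochhammer_cofactor:
  assumes p: "prime p" and k: "k \<le> n"
  shows "scaled_integral (of_nat (dlcm n))
    (fps_const (of_nat p ^ multiplicity p (fact n :: nat)) * fps_of_poly (progression_poly p n k j) *
      inverse (fps_of_poly (pochhammer_cofactor n k)) :: 'a::field_char_0 fps)"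
proof (rule scaled_integral_div_pochhammer_cofactor[OF degree_progression_poly k])
  fix l assume l: "l \<le> n"
  define E where "E = multiplicity p (fact n :: nat)"
  obtain q where q: "int p ^ E * (\<Prod>m<n. int j + int p * (int m - int l)) = fact l * fact (n - l) * q"
    using fact_mult_fact_dvd_prod_progression[OF p l] unfolding E_def by (rule dvdE)
  have "(of_nat p ^ E * poly (progression_poly p n k j) (of_int (int k - int l)) :: 'a) =
      of_int (int p ^ E * (\<Prod>m<n. int j + int p * (int m - int l)))"
    unfolding poly_progression_poly_node by simp
  also have "\<dots> = fact l * fact (n - l) * of_int q"
    unfolding q by simp
  finally show "of_nat p ^ multiplicity p (fact n :: nat) * poly (progression_poly p n k j)
      (of_int (int k - int l)) / (fact l * fact (n - l)) \<in> (\<int> :: 'a set)"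
    unfolding E_def by simp
qed

lemma poly_eq_cofinite:
  fixes p q :: "'a::{idom,ring_char_0} poly"
  assumes "finite A" and "\<And>x. x \<notin> A \<Longrightarrow> poly p x = poly q x"
  shows "p = q"
proof (rule ccontr)
  assume "p \<noteq> q"
  then have "finite {x. poly (p - q) x = 0}"
    by (intro poly_roots_finite) simp
  then have "finite (A \<union> {x. poly (p - q) x = 0})"
    using assms(1) by blast
  moreover have "UNIV \<subseteq> A \<union> {x. poly (p - q) x = 0}"
    using assms(2) by auto
  ultimately show False
    using infinite_UNIV_char_0 finite_subset by blast
qed

definition partial_fraction_numerator :: "nat \<Rightarrow> nat \<Rightarrow> nat \<Rightarrow> nat \<Rightarrow> nat \<Rightarrow> 'a::comm_ring_1 poly" where
  "partial_fraction_numerator n P k k' i =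
    [:of_int (int k' - int k), 1:] ^ (P - i) * (\<Prod>l\<in>{0..n}-{k'}. [:of_int (int l - int k), 1:]) ^ P"

lemma poly_partial_fraction_numerator:
  fixes t :: "'a::field"
  assumes "i \<le> P" and "k' \<le> n" and "t + of_nat k' \<noteq> 0"
  shows "poly (partial_fraction_numerator n P k k' i) (t + of_nat k) =
    pochhammer t (n + 1) ^ P / (t + of_nat k') ^ i"
proof -
  have "pochhammer t (n + 1) = (t + of_nat k') * (\<Prod>l\<in>{0..n}-{k'}. t + of_nat l)"
    using assms(2) by (simp add: pochhammer_Suc_prod prod.remove)
  moreover have "(t + of_nat k') ^ P = (t + of_nat k') ^ (P - i) * (t + of_nat k') ^ i"
    using assms(1) by (simp flip: power_add)
  ultimately show ?thesis
    using assms(3) by (simp add: partial_fraction_numerator_def poly_prod power_mult_distrib ac_simps)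
qed

lemma fps_partial_fraction_numerator_nth:
  fixes k n :: nat
  assumes k: "k \<le> n" and i: "i \<in> {1..P}" and i': "i' \<in> {1..P}"
  shows "(fps_of_poly (partial_fraction_numerator n P k k' i') *
      inverse (fps_of_poly (pochhammer_cofactor n k :: 'a::field_char_0 poly)) ^ P) $ (P - i) =
    (if k' = k \<and> i' = i then 1 else 0)"
proof (cases "k' = k")
  case True
  have "fps_of_poly (pochhammer_cofactor n k :: 'a poly) $ 0 \<noteq> 0"
    by (auto simp: pochhammer_cofactor_def poly_0_coeff_0[symmetric] poly_prod prod_zero_iff)
  then have "fps_of_poly (partial_fraction_numerator n P k k' i') *
      inverse (fps_of_poly (pochhammer_cofactor n k :: 'a poly)) ^ P = fps_X ^ (P - i')"
    using True
    by (simp add: partial_fraction_numerator_def pochhammer_cofactor_def fps_of_poly_mult fps_of_poly_power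
        power_mult_distrib[symmetric] inverse_mult_eq_1')
  then show ?thesis using True i i' by auto
next
  case False
  define R :: "'a poly" where
    "R = [:of_int (int k' - int k), 1:] ^ (P - i') *
      (\<Prod>l\<in>{0..n}-{k'}-{k}. [:of_int (int l - int k), 1:]) ^ P"
  have "(\<Prod>l\<in>{0..n}-{k'}. [:of_int (int l - int k), 1:] :: 'a poly) =
      [:0, 1:] * (\<Prod>l\<in>{0..n}-{k'}-{k}. [:of_int (int l - int k), 1:])"
    using k False prod.remove[of "{0..n}-{k'}" k "\<lambda>l. [:of_int (int l - int k), 1:] :: 'a poly"]
    by simp
  then have "partial_fraction_numerator n P k k' i' = [:0, 1:] ^ P * R"
    unfolding partial_fraction_numerator_def R_def by (simp only: power_mult_distrib mult_ac)
  then have eq: "fps_of_poly (partial_fraction_numerator n P k k' i') *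
      inverse (fps_of_poly (pochhammer_cofactor n k :: 'a poly)) ^ P =
      fps_X ^ P * (fps_of_poly R * inverse (fps_of_poly (pochhammer_cofactor n k)) ^ P)"
    by (simp add: fps_of_poly_mult fps_of_poly_power mult.assoc)
  show ?thesis unfolding eq fps_X_power_mult_nth using False i by simp
qed

lemma partial_fraction_numerator_expansion:
  fixes N :: "'a::field_char_0 poly" and r :: "nat \<Rightarrow> nat \<Rightarrow> 'a"
  assumes N: "\<And>t. pochhammer t (n + 1) \<noteq> 0 \<Longrightarrow> poly N (t + of_nat k) =
      pochhammer t (n + 1) ^ P * (\<Sum>i' = 1..P. \<Sum>k' = 1..n. r i' k' / (t + of_nat k') ^ i')"
  shows "N = (\<Sum>i' = 1..P. \<Sum>k' = 1..n. smult (r i' k') (partial_fraction_numerator n P k k' i'))"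
proof (rule poly_eq_cofinite)
  show "finite ((\<lambda>m. of_nat k - of_nat m :: 'a) ` {0..n})" by simp
  fix u :: 'a assume u: "u \<notin> (\<lambda>m. of_nat k - of_nat m) ` {0..n}"
  define t where "t = u - of_nat k"
  have nonpole: "t + of_nat m \<noteq> 0" if "m \<le> n" for m
    using u that by (auto simp: t_def algebra_simps)
  have u_eq: "u = t + of_nat k" by (simp add: t_def)
  have "pochhammer t (n + 1) \<noteq> 0"
  proof
    assume "pochhammer t (n + 1) = 0"
    then obtain m where "m \<le> n" "t + of_nat m = 0" by (auto simp: pochhammer_eq_0_iff)
    then show False using nonpole by blast
  qed
  then have "poly N u =
      pochhammer t (n + 1) ^ P * (\<Sum>i' = 1..P. \<Sum>k' = 1..n. r i' k' / (t + of_nat k') ^ i')"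
    using N[of t] by (simp add: u_eq)
  also have "\<dots> =
      (\<Sum>i' = 1..P. \<Sum>k' = 1..n. r i' k' * poly (partial_fraction_numerator n P k k' i') u)"
    unfolding sum_distrib_left using nonpole
    by (intro sum.cong refl) (simp add: u_eq poly_partial_fraction_numerator)
  also have "\<dots> =
      poly (\<Sum>i' = 1..P. \<Sum>k' = 1..n. smult (r i' k') (partial_fraction_numerator n P k k' i')) u"
    by (simp add: poly_sum)
  finally show "poly N u = \<dots>" .
qed

lemma principal_part_coeff:
  fixes N :: "'a::field_char_0 poly" and r :: "nat \<Rightarrow> nat \<Rightarrow> 'a"
  assumes k: "k \<in> {1..n}" and i: "i \<in> {1..P}"
    and N: "\<And>t. pochhammer t (n + 1) \<noteq> 0 \<Longrightarrow> poly N (t + of_nat k) =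
      pochhammer t (n + 1) ^ P * (\<Sum>i' = 1..P. \<Sum>k' = 1..n. r i' k' / (t + of_nat k') ^ i')"
  shows "(fps_of_poly N * inverse (fps_of_poly (pochhammer_cofactor n k)) ^ P) $ (P - i) = r i k"
proof -
  have "(fps_of_poly N * inverse (fps_of_poly (pochhammer_cofactor n k)) ^ P) $ (P - i) =
      (\<Sum>i' = 1..P. \<Sum>k' = 1..n. r i' k' * (fps_of_poly (partial_fraction_numerator n P k k' i') *
        inverse (fps_of_poly (pochhammer_cofactor n k)) ^ P) $ (P - i))"
    by (subst partial_fraction_numerator_expansion[OF N])
      (simp_all add: fps_of_poly_sum fps_of_poly_smult sum_distrib_right fps_sum_nth mult.assoc)
  also have "\<dots> = (\<Sum>i' = 1..P. \<Sum>k' = 1..n. if k' = k \<and> i' = i then r i' k' else 0)"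
    using k i by (intro sum.cong refl) (simp add: fps_partial_fraction_numerator_nth)
  also have "\<dots> = (\<Sum>i' = 1..P. if i' = i then r i' k else 0)"
    using k by (intro sum.cong refl) (auto simp: sum.delta)
  also have "\<dots> = r i k"
    using i by simp
  finally show ?thesis .
qed

definition Rn_numerator :: "nat \<Rightarrow> nat \<Rightarrow> nat \<Rightarrow> nat \<Rightarrow> rat poly" where
  "Rn_numerator p s n k = smult (of_nat p ^ n * fact n ^ s)
    ([:- of_nat k, 1:] ^ M0 p s * (\<Prod>j\<in>{1..p-1}. progression_poly p n k j))"

lemma poly_Rn_numerator:
  assumes p: "p > 0" and t: "pochhammer t (n + 1) \<noteq> 0"
  shows "poly (Rn_numerator p s n k) (t + of_nat k) =
    pochhammer t (n + 1) ^ (p - 1 + s) * Rn p s n t"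
proof -
  have "poly (Rn_numerator p s n k) (t + of_nat k) =
      of_nat p ^ (n + n * (p - 1)) * fact n ^ s * t ^ M0 p s *
      (\<Prod>j\<in>{1..p-1}. pochhammer (t + of_nat j / of_nat p) n)"
    using p by (simp add: Rn_numerator_def poly_prod poly_progression_poly_shift prod.distrib
        power_add power_mult)
  also have "n + n * (p - 1) = p * n" using p by (cases p) auto
  finally show ?thesis
    using t by (simp add: Rn_def)
qed

lemma scaled_integral_Rn_numerator:
  assumes p: "prime p" and k: "k \<le> n"
  shows "scaled_integral (of_nat (dlcm n))
    (fps_of_poly (Rn_numerator p s n k) *
      inverse (fps_of_poly (pochhammer_cofactor n k)) ^ (p - 1 + s))"
proof -
  define E where "E = multiplicity p (fact n :: nat)"
  define iv where "iv = inverse (fps_of_poly (pochhammer_cofactor n k) :: rat fps)"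
  have "(p - 1) * E \<le> n" unfolding E_def by (rule multiplicity_prime_fact_le[OF p])
  then have "(of_nat p :: rat) ^ n = of_nat p ^ (n - (p - 1) * E) * (of_nat p ^ E) ^ (p - 1)"
    by (simp add: power_mult[symmetric] power_add[symmetric] mult.commute)
  then have factorization: "fps_of_poly (Rn_numerator p s n k) * iv ^ (p - 1 + s) =
      fps_const (of_nat p ^ (n - (p - 1) * E)) * fps_of_poly ([:- of_nat k, 1:] ^ M0 p s) *
      (\<Prod>j\<in>{1..p-1}. fps_const (of_nat p ^ E) * fps_of_poly (progression_poly p n k j) * iv) *
      (fps_const (fact n) * iv) ^ s"
    by (simp add: Rn_numerator_def fps_of_poly_smult fps_of_poly_mult fps_of_poly_prod prod.distrib
        power_mult_distrib power_add ac_simps)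
  have const: "scaled_integral (of_nat (dlcm n)) (fps_const (of_nat p ^ (n - (p - 1) * E)))"
    by (rule scaled_integral_const) simp
  have linear: "scaled_integral (of_nat (dlcm n)) (fps_of_poly ([:- of_nat k, 1:] ^ M0 p s))"
    unfolding fps_of_poly_power
    by (intro scaled_integral_power scaled_integral_Ints_coeffs) (auto simp: coeff_pCons split: nat.split)
  have progression: "scaled_integral (of_nat (dlcm n))
      (fps_const (of_nat p ^ E) * fps_of_poly (progression_poly p n k j) * iv)" for j
    unfolding iv_def E_def using p k by (rule scaled_integral_progression_div_pochhammer_cofactor)
  have factorial: "scaled_integral (of_nat (dlcm n)) (fps_const (fact n) * iv)"
    unfolding iv_def using k by (rule scaled_integral_fact_div_pochhammer_cofactor)
  show ?thesis
    unfolding iv_def[symmetric] factorization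
    by (intro scaled_integral_mult[OF scaled_integral_mult[OF scaled_integral_mult[OF const linear]
          scaled_integral_prod[OF progression]] scaled_integral_power[OF factorial]])
qed

theorem lemma5p3:
  fixes p s n :: nat and r :: "nat \<Rightarrow> nat \<Rightarrow> rat" and i k :: nat
  assumes "prime p" and "p \<ge> 5" and "s > 0"
    and "n > (p + s) ^ 4"
    and decomp: "\<forall>t::rat. (\<forall>m\<in>{0..n}. t \<noteq> - of_nat m) \<longrightarrow>
        Rn p s n t = (\<Sum>i' = 1..p - 1 + s. \<Sum>k' = 1..n. r i' k' / (t + of_nat k') ^ i')"
    and "i \<in> {1..p - 1 + s}" and "k \<in> {1..n}"
  shows "(of_nat (dlcm n)) ^ (p - 1 + s - i) * r i k \<in> \<int>"
proof -
  have "(fps_of_poly (Rn_numerator p s n k) *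
      inverse (fps_of_poly (pochhammer_cofactor n k)) ^ (p - 1 + s)) $ (p - 1 + s - i) = r i k"
  proof (rule principal_part_coeff[OF \<open>k \<in> {1..n}\<close> \<open>i \<in> {1..p - 1 + s}\<close>])
    fix t :: rat
    assume t: "pochhammer t (n + 1) \<noteq> 0"
    then have "\<forall>m\<in>{0..n}. t \<noteq> - of_nat m" by (auto simp: pochhammer_eq_0_iff)
    then show "poly (Rn_numerator p s n k) (t + of_nat k) = pochhammer t (n + 1) ^ (p - 1 + s) *
        (\<Sum>i' = 1..p - 1 + s. \<Sum>k' = 1..n. r i' k' / (t + of_nat k') ^ i')"
      using decomp poly_Rn_numerator[OF _ t] prime_gt_0_nat[OF \<open>prime p\<close>] by simp
  qed
  moreover have "scaled_integral (of_nat (dlcm n)) (fps_of_poly (Rn_numerator p s n k) *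
      inverse (fps_of_poly (pochhammer_cofactor n k)) ^ (p - 1 + s))"
    using \<open>prime p\<close> \<open>k \<in> {1..n}\<close> by (intro scaled_integral_Rn_numerator) auto
  ultimately show ?thesis
    unfolding scaled_integral_def by metis
qed

end
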